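(* Let $\eta_1\le\eta_2$ be real numbers such that either both $\eta_1,\eta_2\in\mathbb R\setminus\mathbb Z$ or both $\eta_1,\eta_2\in\mathbb Z$. For every $f\in L^1[\eta_1,\eta_2]$ which is continuous in a neighborhood of the integers (in $[\eta_1,\eta_2]$), one has $$\lim_{n\to\infty}\sqrt{n\pi}\int_{\eta_1}^{\eta_2}\cos^{2n}(\pi x)\,f(x)\,dx=\sum_{m\in\mathbb Z,\ \eta_1\le m\le\eta_2}f(m)-\frac{f(\eta_1)\chi_{\mathbb Z}(\eta_1)+f(\eta_2)\chi_{\mathbb Z}(\eta_2)}{2},$$ where $\chi_{\mathbb Z}$ is the characteristic function of $\mathbb Z$.
   Context: $\cos^{2n}(y)$ denotes $(\cos y)^{2n}$; $n$ ranges over $\mathbb N$. *)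

theory Defs
  imports "HOL-Analysis.Analysis"
begin

end

theory Submission
  imports Defs "HOL-Real_Asymp.Real_Asymp"
begin

(* The kernel sqrt (n pi) cos (pi x)^(2n) concentrates at the integers. Over a half period
   [m, m + 1/2] its integral is sqrt (n pi) times the Wallis integral (1/2) prod_k (2k - 1)/(2k),
   which tends to 1/2 by Wallis' product; at distance delta from the integers it is at most
   sqrt (n pi) cos (pi delta)^(2n), which tends to 0. So, for f continuous at an integer m, each
   side of m inside the interval contributes f m / 2, and everything away from the integers
   vanishes in the limit. Cutting [eta1, eta2] at its interior integers reduces the theorem to
   intervals without interior integers, whose halves each see at most one integer endpoint. *)

definition wallis_integral :: "nat \<Rightarrow> real" where
  "wallis_integral n = (1/2) * (\<Prod>k=1..n. (2 * real k - 1) / (2 * real k))"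

lemma wallis_integral_0 [simp]: "wallis_integral 0 = 1/2"
  by (simp add: wallis_integral_def)

lemma wallis_integral_Suc:
  "wallis_integral (Suc n) = wallis_integral n * (2 * real n + 1) / (2 * real n + 2)"
  unfolding wallis_integral_def by (simp add: field_simps)

lemma wallis_integral_nonneg: "wallis_integral n \<ge> 0"
  unfolding wallis_integral_def by (intro mult_nonneg_nonneg prod_nonneg) auto

lemma wallis_integral_squared:
  "wallis_integral n ^ 2 = 1 / (4 * (2 * real n + 1) * (\<Prod>k=1..n. (4 * real k^2) / (4 * real k^2 - 1)))"
proof (induction n)
  case 0
  then show ?case by (simp add: power2_eq_square)
next
  case (Suc n)
  define p where "p = (\<Prod>k=1..n. (4 * real k^2) / (4 * real k^2 - 1))"
  have "4 * real k^2 - 1 > 0" if "k \<ge> 1" for k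
  proof -
    have "1 \<le> real k ^ 2" using that by (simp add: one_le_power)
    then show ?thesis by linarith
  qed
  then have "p > 0"
    unfolding p_def by (intro prod_pos) auto
  have prod_Suc: "(\<Prod>k=1..Suc n. (4 * real k^2) / (4 * real k^2 - 1))
      = p * (4 * (real n + 1)^2 / ((2 * real n + 1) * (2 * real n + 3)))"
    unfolding p_def by (simp add: algebra_simps power2_eq_square)
  have "wallis_integral (Suc n) ^ 2 = wallis_integral n ^ 2 * (2 * real n + 1)^2 / (2 * real n + 2)^2"
    by (simp add: wallis_integral_Suc power_mult_distrib power_divide)
  also have "\<dots> = 1 / (4 * (2 * real (Suc n) + 1) * (\<Prod>k=1..Suc n. (4 * real k^2) / (4 * real k^2 - 1)))"
    using \<open>p > 0\<close> unfolding Suc.IH prod_Suc p_def[symmetric]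
    by (simp add: power2_eq_square divide_simps) (simp add: algebra_simps)
  finally show ?case .
qed

lemma tendsto_sqrt_mult_wallis_integral:
  "(\<lambda>n. sqrt (real n * pi) * wallis_integral n) \<longlonglongrightarrow> 1/2"
proof -
  let ?P = "\<lambda>n. \<Prod>k=1..n. (4 * real k^2) / (4 * real k^2 - 1)"
  have ratio: "(\<lambda>n. real n / (2 * real n + 1)) \<longlonglongrightarrow> 1/2" by real_asymp
  have "(\<lambda>n. pi / 4 * (real n / (2 * real n + 1)) / ?P n) \<longlonglongrightarrow> pi / 4 * (1/2) / (pi/2)"
    by (intro tendsto_intros ratio wallis) auto
  also have "pi / 4 * (1/2) / (pi/2) = 1/4" by simp
  also have "(\<lambda>n. pi / 4 * (real n / (2 * real n + 1)) / ?P n) = (\<lambda>n. (sqrt (real n * pi) * wallis_integral n)^2)"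
    by (simp add: power_mult_distrib wallis_integral_squared mult.commute)
  finally have "(\<lambda>n. sqrt ((sqrt (real n * pi) * wallis_integral n)^2)) \<longlonglongrightarrow> sqrt (1/4)"
    by (rule tendsto_real_sqrt)
  then show ?thesis
    using wallis_integral_nonneg by (simp add: real_sqrt_mult real_sqrt_divide)
qed

lemma integral_cos_pow_half_period_Suc:
  assumes "m \<in> \<int>"
  shows "(2 * real n + 2) * integral {m..m+1/2} (\<lambda>x. cos (pi * x) ^ (2 * Suc n))
       = (2 * real n + 1) * integral {m..m+1/2} (\<lambda>x. cos (pi * x) ^ (2 * n))"
proof -
  define F where "F x = sin (pi * x) * cos (pi * x) ^ (2*n+1) / pi" for x
  define F' where "F' x = (2 * real n + 2) * cos (pi * x) ^ (2 * Suc n) - (2 * real n + 1) * cos (pi * x) ^ (2 * n)" for x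
  have "(F has_real_derivative F' x) (at x)" for x
  proof -
    have "(F has_real_derivative (cos (pi * x) * pi * cos (pi * x) ^ (2*n+1)
        + sin (pi * x) * (real (2*n+1) * cos (pi * x) ^ (2*n) * (- sin (pi * x) * pi))) / pi) (at x)"
      unfolding F_def by (rule derivative_eq_intros refl | simp)+
    also have "(cos (pi * x) * pi * cos (pi * x) ^ (2*n+1)
        + sin (pi * x) * (real (2*n+1) * cos (pi * x) ^ (2*n) * (- sin (pi * x) * pi))) / pi
        = cos (pi * x) ^ (2*n+2) - real (2*n+1) * cos (pi * x) ^ (2*n) * (sin (pi * x))\<^sup>2"
      by (simp add: field_simps power_Suc power2_eq_square)
    also have "\<dots> = F' x"
      unfolding sin_squared_eq F'_def by (simp add: algebra_simps power_add power2_eq_square)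
    finally show ?thesis .
  qed
  then have "(F' has_integral (F (m + 1/2) - F m)) {m..m+1/2}"
    by (intro fundamental_theorem_of_calculus) (auto intro: DERIV_subset simp: has_real_derivative_iff_has_vector_derivative[symmetric])
  moreover have "F (m + 1/2) = 0" "F m = 0"
    using assms by (auto elim!: Ints_cases simp: F_def distrib_left cos_add)
  moreover have "(\<lambda>x. cos (pi * x) ^ k) integrable_on {m..m+1/2}" for k
    by (intro integrable_continuous_interval continuous_intros)
  ultimately show ?thesis
    unfolding F'_def by (simp add: has_integral_iff integral_diff integrable_on_cmult_left del: mult_Suc_right)
qed

lemma integral_cos_pow_half_period:
  "m \<in> \<int> \<Longrightarrow> integral {m..m+1/2} (\<lambda>x. cos (pi * x) ^ (2 * n)) = wallis_integral n"
proof (induction n)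
  case (Suc n)
  with integral_cos_pow_half_period_Suc[OF Suc.prems, of n] show ?case
    by (simp add: wallis_integral_Suc field_simps del: mult_Suc_right)
qed simp

lemma Ints_less_imp_add_1_le: "a \<in> \<int> \<Longrightarrow> b \<in> \<int> \<Longrightarrow> a < b \<Longrightarrow> a + 1 \<le> (b::real)"
  by (elim Ints_cases) simp

lemma dist_Ints_ge:
  fixes m k x t :: real
  assumes "m \<in> \<int>" "k \<in> \<int>" "m + t \<le> x" "x \<le> m + 1 - t"
  shows "t \<le> \<bar>x - k\<bar>"
proof (cases "k \<le> m")
  case False
  then have "m + 1 \<le> k" using Ints_less_imp_add_1_le[OF assms(1,2)] by simp
  then show ?thesis using assms by linarith
qed (use assms in linarith)

lemma abs_cos_pi_le_far_from_Ints:
  fixes x \<delta> :: real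
  assumes "0 \<le> \<delta>" "\<And>k. k \<in> \<int> \<Longrightarrow> \<delta> \<le> \<bar>x - k\<bar>"
  shows "\<bar>cos (pi * x)\<bar> \<le> cos (pi * \<delta>)"
proof -
  define y where "y = x - of_int (round x)"
  have y_half: "\<bar>y\<bar> \<le> 1/2"
    unfolding y_def using of_int_round_ge[of x] of_int_round_le[of x] by linarith
  have "\<delta> \<le> \<bar>y\<bar>" unfolding y_def using assms(2)[of "of_int (round x)"] by simp
  have "\<bar>cos (pi * x)\<bar> = \<bar>cos (pi * (y + of_int (round x)))\<bar>"
    unfolding y_def by simp
  also have "\<dots> = \<bar>cos (pi * y)\<bar>"
    by (simp add: distrib_left cos_add)
  also have "\<dots> = \<bar>cos (pi * \<bar>y\<bar>)\<bar>"
    by (metis abs_mult abs_of_nonneg cos_abs_real pi_ge_zero)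
  also have "\<dots> = cos (pi * \<bar>y\<bar>)"
  proof -
    have "0 \<le> pi * \<bar>y\<bar>" "pi * \<bar>y\<bar> \<le> pi / 2"
      using mult_left_mono[OF y_half, of pi] by auto
    then show ?thesis by (intro abs_of_nonneg cos_ge_zero) linarith+
  qed
  also have "\<dots> \<le> cos (pi * \<delta>)"
    using y_half \<open>\<delta> \<le> \<bar>y\<bar>\<close> assms(1) by (intro cos_monotone_0_pi_le) auto
  finally show ?thesis .
qed

lemma cos_pi_pow_le_far_from_Ints:
  fixes x \<delta> :: real
  assumes "0 \<le> \<delta>" "\<And>k. k \<in> \<int> \<Longrightarrow> \<delta> \<le> \<bar>x - k\<bar>"
  shows "cos (pi * x) ^ (2 * n) \<le> cos (pi * \<delta>) ^ (2 * n)"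
  using power_mono[OF abs_cos_pi_le_far_from_Ints[OF assms], of "2 * n"]
  by (simp add: power_even_abs)

lemma abs_cos_pi_less_1:
  assumes "0 < t" "t \<le> 1/2"
  shows "\<bar>cos (pi * t)\<bar> < 1"
proof -
  have "0 < pi * t" "pi * t \<le> pi / 2"
    using assms mult_left_mono[OF assms(2), of pi] by auto
  then show ?thesis
    using cos_monotone_0_pi[of 0 "pi * t"] cos_ge_zero[of "pi * t"] by auto
qed

lemma tendsto_sqrt_mult_power_0:
  fixes c :: real
  assumes "\<bar>c\<bar> < 1"
  shows "(\<lambda>n. sqrt (real n * pi) * c ^ (2 * n)) \<longlonglongrightarrow> 0"
proof (rule Lim_null_comparison)
  have "norm (c\<^sup>2) < 1" using assms by (simp add: abs_square_less_1)
  from tendsto_mult_right_zero[OF powser_times_n_limit_0[OF this], of "sqrt pi"]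
  show "(\<lambda>n. sqrt pi * (real n * (c\<^sup>2) ^ n)) \<longlonglongrightarrow> 0" by simp
  have "sqrt (real n) \<le> real n" for n
    by (intro real_le_lsqrt) (simp_all add: power2_eq_square, metis le_square of_nat_le_iff of_nat_mult)
  then show "\<forall>\<^sub>F n in sequentially. norm (sqrt (real n * pi) * c ^ (2 * n)) \<le> sqrt pi * (real n * (c\<^sup>2) ^ n)"
    by (intro always_eventually allI)
      (simp add: real_sqrt_mult power_mult abs_mult mult_left_mono mult_right_mono)
qed

lemma absolutely_integrable_cos_pow_mult:
  fixes f :: "real \<Rightarrow> real"
  assumes "f absolutely_integrable_on {a..b}"
  shows "(\<lambda>x. cos (pi * x) ^ k * f x) absolutely_integrable_on {a..b}"
proof (rule absolutely_integrable_bounded_measurable_product_real)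
  show "(\<lambda>x. cos (pi * x) ^ k) \<in> borel_measurable (lebesgue_on {a..b})"
    by (intro continuous_imp_measurable_on_sets_lebesgue continuous_intros) auto
  show "bounded ((\<lambda>x. cos (pi * x) ^ k) ` {a..b})"
    unfolding bounded_iff by (auto simp: power_abs intro!: exI[of _ 1] power_le_one)
qed (use assms in auto)

lemma integrable_cos_pow_mult:
  fixes f :: "real \<Rightarrow> real"
  shows "f absolutely_integrable_on {a..b} \<Longrightarrow> (\<lambda>x. cos (pi * x) ^ k * f x) integrable_on {a..b}"
  using absolutely_integrable_cos_pow_mult set_lebesgue_integral_eq_integral(1) by blast

lemma tendsto_cos_pow_integral_far_from_Ints:
  fixes f :: "real \<Rightarrow> real"
  assumes f: "f absolutely_integrable_on {a..b}" and "0 < \<delta>"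
    and far: "\<And>x k. x \<in> {a..b} \<Longrightarrow> k \<in> \<int> \<Longrightarrow> \<delta> \<le> \<bar>x - k\<bar>"
  shows "(\<lambda>n. sqrt (real n * pi) * integral {a..b} (\<lambda>x. cos (pi * x) ^ (2 * n) * f x)) \<longlonglongrightarrow> 0"
proof (rule Lim_null_comparison)
  \<comment> \<open>Unless the interval is empty, the hypothesis forces \<open>\<delta> \<le> 1/2\<close>.\<close>
  define c where "c = cos (pi * min \<delta> (1/2))"
  define A where "A = integral {a..b} (\<lambda>x. \<bar>f x\<bar>)"
  have bound: "\<bar>integral {a..b} (\<lambda>x. cos (pi * x) ^ (2 * n) * f x)\<bar> \<le> c ^ (2 * n) * A" for n
  proof -
    have "norm (integral {a..b} (\<lambda>x. cos (pi * x) ^ (2 * n) * f x))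
        \<le> integral {a..b} (\<lambda>x. c ^ (2 * n) * \<bar>f x\<bar>)"
    proof (rule integral_norm_bound_integral)
      show "(\<lambda>x. cos (pi * x) ^ (2 * n) * f x) integrable_on {a..b}"
        using f by (rule integrable_cos_pow_mult)
      show "(\<lambda>x. c ^ (2 * n) * \<bar>f x\<bar>) integrable_on {a..b}"
        using f by (intro integrable_on_mult_right) (simp add: absolutely_integrable_on_def)
    next
      fix x assume "x \<in> {a..b}"
      then have "cos (pi * x) ^ (2 * n) \<le> c ^ (2 * n)"
        unfolding c_def using \<open>0 < \<delta>\<close> far by (intro cos_pi_pow_le_far_from_Ints) force+
      then show "norm (cos (pi * x) ^ (2 * n) * f x) \<le> c ^ (2 * n) * \<bar>f x\<bar>"
        by (simp add: abs_mult power_even_abs mult_right_mono)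
    qed
    then show ?thesis by (simp add: A_def)
  qed
  show "\<forall>\<^sub>F n in sequentially.
      norm (sqrt (real n * pi) * integral {a..b} (\<lambda>x. cos (pi * x) ^ (2 * n) * f x))
      \<le> A * (sqrt (real n * pi) * c ^ (2 * n))"
    using mult_left_mono[OF bound, of "sqrt (real n * pi)" for n]
    by (intro always_eventually allI) (simp add: abs_mult mult_ac)
  have "\<bar>c\<bar> < 1"
    unfolding c_def using \<open>0 < \<delta>\<close> by (intro abs_cos_pi_less_1) auto
  then show "(\<lambda>n. A * (sqrt (real n * pi) * c ^ (2 * n))) \<longlonglongrightarrow> 0"
    by (intro tendsto_mult_right_zero tendsto_sqrt_mult_power_0)
qed

lemma tendsto_cos_pow_integral_from_Int_one:
  assumes "m \<in> \<int>" "m < b" "b < m + 1"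
  shows "(\<lambda>n. sqrt (real n * pi) * integral {m..b} (\<lambda>x. cos (pi * x) ^ (2 * n))) \<longlonglongrightarrow> 1/2"
proof -
  define t where "t = min (b - m) (1/2)"
  have t: "0 < t" "t \<le> 1/2" "m + t \<le> b" using assms by (auto simp: t_def min_def)
  let ?I = "\<lambda>n a b. integral {a..b} (\<lambda>x. cos (pi * x) ^ (2 * n) * 1)"
  have combine: "?I n m (m+t) + ?I n (m+t) (m+1/2) = ?I n m (m+1/2)" "?I n m (m+t) + ?I n (m+t) b = ?I n m b" for n
    using t by (auto intro!: Henstock_Kurzweil_Integration.integral_combine integrable_continuous_interval continuous_intros)
  have split: "?I n m b = wallis_integral n - ?I n (m+t) (m+1/2) + ?I n (m+t) b" for n
    using combine[of n] integral_cos_pow_half_period[OF assms(1), of n] by simp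
  have far: "(\<lambda>n. sqrt (real n * pi) * ?I n c d) \<longlonglongrightarrow> 0"
    if "m + t \<le> c" "d \<le> m + 1 - min t (m + 1 - b)" for c d
    using assms t that
    by (intro tendsto_cos_pow_integral_far_from_Ints[where \<delta>="min t (m + 1 - b)"] absolutely_integrable_on_const dist_Ints_ge[of m]) auto
  have "(\<lambda>n. sqrt (real n * pi) * ?I n m b) \<longlonglongrightarrow> 1/2 - 0 + 0"
    unfolding split distrib_left right_diff_distrib using t
    by (intro tendsto_add tendsto_diff tendsto_sqrt_mult_wallis_integral far) (auto simp: min_def)
  then show ?thesis by simp
qed

lemma abs_cos_pow_integral_le_wallis_integral:
  fixes g :: "real \<Rightarrow> real"
  assumes "m \<in> \<int>" "0 \<le> t" "t \<le> 1/2" and g: "g absolutely_integrable_on {m..m+t}"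
    and small: "\<And>x. x \<in> {m..m+t} \<Longrightarrow> \<bar>g x\<bar> \<le> e"
  shows "\<bar>integral {m..m+t} (\<lambda>x. cos (pi * x) ^ (2 * n) * g x)\<bar> \<le> e * wallis_integral n"
proof -
  have "0 \<le> e" using small[of m] \<open>0 \<le> t\<close> by force
  have cos_integrable: "(\<lambda>x. cos (pi * x) ^ (2 * n)) integrable_on {a..b}" for a b
    by (intro integrable_continuous_interval continuous_intros)
  have "norm (integral {m..m+t} (\<lambda>x. cos (pi * x) ^ (2 * n) * g x))
      \<le> integral {m..m+t} (\<lambda>x. e * cos (pi * x) ^ (2 * n))"
  proof (rule integral_norm_bound_integral)
    fix x assume x: "x \<in> {m..m+t}"
    have cos_nonneg: "0 \<le> cos (pi * x) ^ (2 * n)" by (simp add: power_mult)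
    show "norm (cos (pi * x) ^ (2 * n) * g x) \<le> e * cos (pi * x) ^ (2 * n)"
      unfolding real_norm_def abs_mult abs_of_nonneg[OF cos_nonneg]
      using mult_right_mono[OF small[OF x] cos_nonneg] by (simp add: mult.commute)
  next
    show "(\<lambda>x. cos (pi * x) ^ (2 * n) * g x) integrable_on {m..m+t}"
      using g by (rule integrable_cos_pow_mult)
    show "(\<lambda>x. e * cos (pi * x) ^ (2 * n)) integrable_on {m..m+t}"
      by (intro integrable_continuous_interval continuous_intros)
  qed
  also have "\<dots> \<le> e * integral {m..m+1/2} (\<lambda>x. cos (pi * x) ^ (2 * n))"
    using assms \<open>0 \<le> e\<close> cos_integrable
    by (auto intro!: mult_left_mono integral_subset_le simp: power_mult)
  finally show ?thesis
    using integral_cos_pow_half_period[OF \<open>m \<in> \<int>\<close>] by simp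
qed

lemma tendsto_cos_pow_integral_from_Int_0:
  fixes g :: "real \<Rightarrow> real"
  assumes m: "m \<in> \<int>" and "m < b" "b < m + 1" and g: "g absolutely_integrable_on {m..b}"
    and cont: "continuous (at m within {m..b}) g" and "g m = 0"
  shows "(\<lambda>n. sqrt (real n * pi) * integral {m..b} (\<lambda>x. cos (pi * x) ^ (2 * n) * g x)) \<longlonglongrightarrow> 0"
proof (rule tendstoI)
  fix \<epsilon> :: real assume "\<epsilon> > 0"
  then obtain d where "d > 0" and d: "\<And>x. x \<in> {m..b} \<Longrightarrow> dist x m < d \<Longrightarrow> \<bar>g x\<bar> < \<epsilon>/4"
    using cont \<open>g m = 0\<close> unfolding continuous_within_eps_delta dist_real_def
    by (metis diff_zero zero_less_divide_iff zero_less_numeral)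
  define s where "s = min (d/2) (min (1/2) ((b - m)/2))"
  have s: "0 < s" "s \<le> 1/2" "m + s < b" "s < d"
    using \<open>d > 0\<close> \<open>m < b\<close> by (auto simp: s_def min_def field_simps)
  \<comment> \<open>On \<open>[m, m + s]\<close> the kernel has mass below 1 for large \<open>n\<close>; on \<open>[m + s, b]\<close> it decays geometrically.\<close>
  let ?k = "\<lambda>n. sqrt (real n * pi)"
  let ?I = "\<lambda>n a b. integral {a..b} (\<lambda>x. cos (pi * x) ^ (2 * n) * g x)"
  have split: "?I n m b = ?I n m (m+s) + ?I n (m+s) b" for n
    using s by (intro Henstock_Kurzweil_Integration.integral_combine[symmetric] integrable_cos_pow_mult g) auto
  have bound: "\<bar>?I n m (m+s)\<bar> \<le> \<epsilon>/4 * wallis_integral n" for n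
    using s d by (intro abs_cos_pow_integral_le_wallis_integral m absolutely_integrable_on_subinterval[OF g])
      (auto simp: dist_real_def less_imp_le)
  have near: "\<bar>?k n * ?I n m (m+s)\<bar> \<le> \<epsilon>/4 * (?k n * wallis_integral n)" for n
    using mult_left_mono[OF bound[of n], of "?k n"] by (simp add: abs_mult mult_ac)
  have "(\<lambda>n. ?k n * ?I n (m+s) b) \<longlonglongrightarrow> 0"
    using s m \<open>b < m + 1\<close>
    by (intro tendsto_cos_pow_integral_far_from_Ints[where \<delta>="min s (m + 1 - b)"]
        absolutely_integrable_on_subinterval[OF g] dist_Ints_ge[of m]) auto
  then have "\<forall>\<^sub>F n in sequentially. \<bar>?k n * ?I n (m+s) b\<bar> < \<epsilon>/2"
    using \<open>\<epsilon> > 0\<close> by (auto dest!: tendstoD[where e="\<epsilon>/2"])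
  moreover have "\<forall>\<^sub>F n in sequentially. ?k n * wallis_integral n < 1"
    using order_tendstoD(2)[OF tendsto_sqrt_mult_wallis_integral, of 1] by simp
  ultimately show "\<forall>\<^sub>F n in sequentially. dist (?k n * ?I n m b) 0 < \<epsilon>"
  proof eventually_elim
    case (elim n)
    have "\<epsilon>/4 * (?k n * wallis_integral n) \<le> \<epsilon>/4"
      using elim(2) \<open>\<epsilon> > 0\<close> by (simp add: mult_left_le)
    with near[of n] elim(1) show ?case
      unfolding split distrib_left dist_real_def by linarith
  qed
qed

lemma tendsto_cos_pow_integral_from_Int:
  fixes f :: "real \<Rightarrow> real"
  assumes m: "m \<in> \<int>" and "m < b" "b < m + 1" and f: "f absolutely_integrable_on {m..b}"
    and cont: "continuous (at m within {m..b}) f"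
  shows "(\<lambda>n. sqrt (real n * pi) * integral {m..b} (\<lambda>x. cos (pi * x) ^ (2 * n) * f x)) \<longlonglongrightarrow> f m / 2"
proof -
  let ?I = "\<lambda>n g. integral {m..b} (\<lambda>x. cos (pi * x) ^ (2 * n) * g x)"
  have "?I n f = f m * ?I n (\<lambda>_. 1) + ?I n (\<lambda>x. f x - f m)" for n
  proof -
    have "(\<lambda>x. cos (pi * x) ^ (2 * n) * f m) integrable_on {m..b}"
      by (intro integrable_continuous_interval continuous_intros)
    from integral_diff[OF integrable_cos_pow_mult[OF f] this] show ?thesis
      by (simp add: right_diff_distrib)
  qed
  moreover have "(\<lambda>n. f m * (sqrt (real n * pi) * ?I n (\<lambda>_. 1)) + sqrt (real n * pi) * ?I n (\<lambda>x. f x - f m))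
      \<longlonglongrightarrow> f m * (1/2) + 0"
    using assms tendsto_cos_pow_integral_from_Int_one[OF m \<open>m < b\<close> \<open>b < m + 1\<close>]
    by (intro tendsto_add tendsto_mult_left tendsto_cos_pow_integral_from_Int_0 set_integral_diff(1) continuous_intros)
      auto
  ultimately show ?thesis
    by (simp add: distrib_left mult.left_commute)
qed

lemma Ints_Int_greaterThanLessThan_floor_add_1:
  fixes a :: "'a::floor_ceiling"
  shows "\<int> \<inter> {a<..<of_int (\<lfloor>a\<rfloor> + 1)} = {}"
proof -
  have "\<not> (a < of_int j \<and> of_int j < (of_int (\<lfloor>a\<rfloor> + 1) :: 'a))" for j
  proof
    assume "a < of_int j \<and> of_int j < (of_int (\<lfloor>a\<rfloor> + 1) :: 'a)"
    then have "\<lfloor>a\<rfloor> < j" "j < \<lfloor>a\<rfloor> + 1"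
      by (auto simp: floor_less_iff simp del: of_int_add)
    then show False by linarith
  qed
  then show ?thesis by (auto elim!: Ints_cases)
qed

lemma finite_Ints_greaterThanLessThan: "finite (\<int> \<inter> {a<..<b :: 'a::floor_ceiling})"
  by (rule finite_subset[OF _ finite_int_segment[of a b]]) auto

lemma tendsto_cos_pow_integral_left_end:
  fixes f :: "real \<Rightarrow> real"
  assumes "a < c" and no_Ints: "\<int> \<inter> {a<..c} = {}" and f: "f absolutely_integrable_on {a..c}"
    and cont: "a \<in> \<int> \<Longrightarrow> continuous (at a within {a..c}) f"
  shows "(\<lambda>n. sqrt (real n * pi) * integral {a..c} (\<lambda>x. cos (pi * x) ^ (2 * n) * f x))
    \<longlonglongrightarrow> f a * indicator \<int> a / 2"
proof (cases "a \<in> \<int>")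
  case True
  then have "a + 1 \<in> \<int>" by simp
  with no_Ints have "c < a + 1" by fastforce
  with True show ?thesis
    using tendsto_cos_pow_integral_from_Int[OF True \<open>a < c\<close> _ f cont] by simp
next
  case False
  define l where "l = real_of_int \<lfloor>a\<rfloor>"
  have "l \<in> \<int>" "l < a" "a < l + 1"
    using False of_int_floor_le[of a] unfolding l_def by (auto simp: order.order_iff_strict)
  moreover have "l + 1 \<notin> {a<..c}"
    using no_Ints Ints_add[OF \<open>l \<in> \<int>\<close> Ints_1] by blast
  with \<open>a < l + 1\<close> have "c < l + 1" by auto
  ultimately have "(\<lambda>n. sqrt (real n * pi) * integral {a..c} (\<lambda>x. cos (pi * x) ^ (2 * n) * f x)) \<longlonglongrightarrow> 0"
    by (intro tendsto_cos_pow_integral_far_from_Ints[OF f, where \<delta>="min (a - l) (l + 1 - c)"] dist_Ints_ge[of l])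
      (auto simp: min_def)
  with False show ?thesis by simp
qed

lemma tendsto_cos_pow_integral_right_end:
  fixes f :: "real \<Rightarrow> real"
  assumes "c < b" and no_Ints: "\<int> \<inter> {c..<b} = {}" and f: "f absolutely_integrable_on {c..b}"
    and cont: "b \<in> \<int> \<Longrightarrow> continuous (at b within {c..b}) f"
  shows "(\<lambda>n. sqrt (real n * pi) * integral {c..b} (\<lambda>x. cos (pi * x) ^ (2 * n) * f x))
    \<longlonglongrightarrow> f b * indicator \<int> b / 2"
proof -
  have "-b < -c" using \<open>c < b\<close> by simp
  moreover have "\<int> \<inter> {-b<..-c} = {}"
  proof (intro equalityI subsetI)
    fix k assume "k \<in> \<int> \<inter> {-b<..-c}"
    then have "-k \<in> \<int> \<inter> {c..<b}" by auto
    with no_Ints show "k \<in> {}" by simp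
  qed simp
  moreover have "(\<lambda>y. f (-y)) absolutely_integrable_on {-b..-c}"
    using f by simp
  moreover have "continuous (at (-b) within {-b..-c}) (\<lambda>y. f (-y))" if "-b \<in> \<int>"
  proof -
    have "continuous (at (- (-b)) within uminus ` {-b..-c}) f"
      using that cont by simp
    then show ?thesis
      using continuous_within_compose2[of "-b" "{-b..-c}" uminus f] by (simp add: continuous_ident continuous_minus)
  qed
  ultimately have "(\<lambda>n. sqrt (real n * pi) * integral {-b..-c} (\<lambda>y. cos (pi * y) ^ (2 * n) * f (-y)))
      \<longlonglongrightarrow> f (- (-b)) * indicator \<int> (-b) / 2"
    by (rule tendsto_cos_pow_integral_left_end)
  moreover have "integral {-b..-c} (\<lambda>y. cos (pi * y) ^ (2 * n) * f (-y))
      = integral {c..b} (\<lambda>x. cos (pi * x) ^ (2 * n) * f x)" for n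
    using Henstock_Kurzweil_Integration.integral_reflect_real[of b c "\<lambda>x. cos (pi * x) ^ (2 * n) * f x"]
    by simp
  moreover have "indicator \<int> (-b) = (indicator \<int> b :: real)"
    by (simp add: indicator_def)
  ultimately show ?thesis by simp
qed

lemma tendsto_cos_pow_integral_no_interior_Ints:
  fixes f :: "real \<Rightarrow> real"
  assumes "a < b" and no_Ints: "\<int> \<inter> {a<..<b} = {}" and f: "f absolutely_integrable_on {a..b}"
    and cont_a: "a \<in> \<int> \<Longrightarrow> continuous (at a within {a..b}) f"
    and cont_b: "b \<in> \<int> \<Longrightarrow> continuous (at b within {a..b}) f"
  shows "(\<lambda>n. sqrt (real n * pi) * integral {a..b} (\<lambda>x. cos (pi * x) ^ (2 * n) * f x))
    \<longlonglongrightarrow> (f a * indicator \<int> a + f b * indicator \<int> b) / 2"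
proof -
  define c where "c = (a + b) / 2"
  have c: "a < c" "c < b" using \<open>a < b\<close> by (auto simp: c_def)
  have "(\<lambda>n. sqrt (real n * pi) * integral {a..c} (\<lambda>x. cos (pi * x) ^ (2 * n) * f x))
      \<longlonglongrightarrow> f a * indicator \<int> a / 2"
    using c no_Ints cont_a
    by (intro tendsto_cos_pow_integral_left_end absolutely_integrable_on_subinterval[OF f])
      (auto elim: continuous_within_subset)
  moreover have "(\<lambda>n. sqrt (real n * pi) * integral {c..b} (\<lambda>x. cos (pi * x) ^ (2 * n) * f x))
      \<longlonglongrightarrow> f b * indicator \<int> b / 2"
    using c no_Ints cont_b
    by (intro tendsto_cos_pow_integral_right_end absolutely_integrable_on_subinterval[OF f])
      (auto elim: continuous_within_subset)
  moreover have "integral {a..b} (\<lambda>x. cos (pi * x) ^ (2 * n) * f x)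
      = integral {a..c} (\<lambda>x. cos (pi * x) ^ (2 * n) * f x) + integral {c..b} (\<lambda>x. cos (pi * x) ^ (2 * n) * f x)" for n
    using c by (intro Henstock_Kurzweil_Integration.integral_combine[symmetric] integrable_cos_pow_mult f) auto
  ultimately show ?thesis
    by (simp add: distrib_left add_divide_distrib tendsto_add)
qed

definition Ints_trapezoid_sum :: "(real \<Rightarrow> real) \<Rightarrow> real \<Rightarrow> real \<Rightarrow> real" where
  "Ints_trapezoid_sum f a b =
    (\<Sum>m \<in> \<int> \<inter> {a<..<b}. f m) + (f a * indicator \<int> a + f b * indicator \<int> b) / 2"

lemma Ints_trapezoid_sum_split:
  assumes "m \<in> \<int>" "a < m" "m < b"
  shows "Ints_trapezoid_sum f a b = Ints_trapezoid_sum f a m + Ints_trapezoid_sum f m b"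
proof -
  have decomp: "\<int> \<inter> {a<..<b} = (\<int> \<inter> {a<..<m}) \<union> insert m (\<int> \<inter> {m<..<b})"
    using assms by auto
  have "(\<Sum>k \<in> \<int> \<inter> {a<..<b}. f k) = (\<Sum>k \<in> \<int> \<inter> {a<..<m}. f k) + (f m + (\<Sum>k \<in> \<int> \<inter> {m<..<b}. f k))"
    unfolding decomp by (subst sum.union_disjoint) (auto simp: finite_Ints_greaterThanLessThan)
  with assms show ?thesis
    unfolding Ints_trapezoid_sum_def by (simp add: field_simps)
qed

lemma tendsto_cos_pow_integral_Ints_trapezoid_sum:
  fixes f :: "real \<Rightarrow> real"
  assumes "a < b" and f: "f absolutely_integrable_on {a..b}"
    and cont: "\<And>m. m \<in> \<int> \<inter> {a..b} \<Longrightarrow> continuous (at m within {a..b}) f"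
  shows "(\<lambda>n. sqrt (real n * pi) * integral {a..b} (\<lambda>x. cos (pi * x) ^ (2 * n) * f x))
    \<longlonglongrightarrow> Ints_trapezoid_sum f a b"
  using assms
proof (induction "nat (\<lfloor>b\<rfloor> - \<lfloor>a\<rfloor>)" arbitrary: a rule: less_induct)
  case less
  show ?case
  proof (cases "\<int> \<inter> {a<..<b} = {}")
    case True
    with less.prems show ?thesis
      by (simp add: Ints_trapezoid_sum_def tendsto_cos_pow_integral_no_interior_Ints)
  next
    case False
    define m where "m = real_of_int (\<lfloor>a\<rfloor> + 1)"
    have "m \<in> \<int>" "a < m" by (auto simp: m_def)
    have no_Ints: "\<int> \<inter> {a<..<m} = {}"
      unfolding m_def by (rule Ints_Int_greaterThanLessThan_floor_add_1)
    from False obtain k where "k \<in> \<int>" "a < k" "k < b" by auto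
    moreover from calculation no_Ints have "\<not> k < m" by auto
    ultimately have "m < b" by linarith
    have cont_sub: "continuous (at x within {c..d}) f" if "x \<in> \<int> \<inter> {c..d}" "{c..d} \<subseteq> {a..b}" for x c d
      using that less.prems(3)[of x] by (auto intro: continuous_within_subset)
    let ?I = "\<lambda>n a b. integral {a..b} (\<lambda>x. cos (pi * x) ^ (2 * n) * f x)"
    have left: "(\<lambda>n. sqrt (real n * pi) * ?I n a m) \<longlonglongrightarrow> Ints_trapezoid_sum f a m"
      unfolding Ints_trapezoid_sum_def using \<open>a < m\<close> \<open>m < b\<close> no_Ints
      by (simp, intro tendsto_cos_pow_integral_no_interior_Ints absolutely_integrable_on_subinterval[OF less.prems(2)] cont_sub)
        auto
    have right: "(\<lambda>n. sqrt (real n * pi) * ?I n m b) \<longlonglongrightarrow> Ints_trapezoid_sum f m b"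
    proof (rule less.hyps)
      have "\<lfloor>a\<rfloor> + 1 \<le> \<lfloor>b\<rfloor>"
        using \<open>m < b\<close> unfolding m_def le_floor_iff by linarith
      then show "nat (\<lfloor>b\<rfloor> - \<lfloor>m\<rfloor>) < nat (\<lfloor>b\<rfloor> - \<lfloor>a\<rfloor>)"
        by (simp add: m_def)
    qed (use \<open>a < m\<close> \<open>m < b\<close> less.prems(2) in \<open>auto intro: cont_sub absolutely_integrable_on_subinterval\<close>)
    have split: "?I n a b = ?I n a m + ?I n m b" for n
      using \<open>a < m\<close> \<open>m < b\<close>
      by (intro Henstock_Kurzweil_Integration.integral_combine[symmetric] integrable_cos_pow_mult less.prems) auto
    show ?thesis
      unfolding split distrib_left Ints_trapezoid_sum_split[OF \<open>m \<in> \<int>\<close> \<open>a < m\<close> \<open>m < b\<close>]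
      by (rule tendsto_add[OF left right])
  qed
qed

lemma Ints_trapezoid_sum_altdef:
  fixes f :: "real \<Rightarrow> real"
  assumes "a < b"
  shows "Ints_trapezoid_sum f a b
    = (\<Sum>m \<in> {m. m \<in> \<int> \<and> a \<le> m \<and> m \<le> b}. f m) - (f a * indicator \<int> a + f b * indicator \<int> b) / 2"
proof -
  have decomp: "{m. m \<in> \<int> \<and> a \<le> m \<and> m \<le> b} = (\<int> \<inter> {a<..<b}) \<union> (\<int> \<inter> {a, b})"
    using assms by auto
  have "(\<Sum>m \<in> {m. m \<in> \<int> \<and> a \<le> m \<and> m \<le> b}. f m)
      = (\<Sum>m \<in> \<int> \<inter> {a<..<b}. f m) + (\<Sum>m \<in> \<int> \<inter> {a, b}. f m)"
    unfolding decomp by (rule sum.union_disjoint) (auto simp: finite_Ints_greaterThanLessThan)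
  moreover have "(\<Sum>m \<in> \<int> \<inter> {a, b}. f m) = f a * indicator \<int> a + f b * indicator \<int> b"
    using assms by (cases "a \<in> \<int>"; cases "b \<in> \<int>") (auto simp: Int_insert_right)
  ultimately show ?thesis
    unfolding Ints_trapezoid_sum_def by (simp add: field_simps)
qed

lemma tendsto_cos_pow_integral:
  fixes f :: "real \<Rightarrow> real"
  assumes "a \<le> b" and f: "f absolutely_integrable_on {a..b}"
    and cont: "\<And>m. m \<in> \<int> \<inter> {a..b} \<Longrightarrow> continuous (at m within {a..b}) f"
  shows "(\<lambda>n. sqrt (real n * pi) * integral {a..b} (\<lambda>x. cos (pi * x) ^ (2 * n) * f x))
    \<longlonglongrightarrow> (\<Sum>m \<in> {m. m \<in> \<int> \<and> a \<le> m \<and> m \<le> b}. f m) - (f a * indicator \<int> a + f b * indicator \<int> b) / 2"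
proof (cases "a = b")
  case True
  have singleton: "{m. m \<in> \<int> \<and> a \<le> m \<and> m \<le> b} = \<int> \<inter> {b}"
    using True by auto
  show ?thesis
    unfolding singleton using True by (cases "b \<in> \<int>") simp_all
next
  case False
  with \<open>a \<le> b\<close> have "a < b" by simp
  from tendsto_cos_pow_integral_Ints_trapezoid_sum[OF this f cont] show ?thesis
    unfolding Ints_trapezoid_sum_altdef[OF \<open>a < b\<close>] .
qed

theorem theorem1p2:
  fixes f :: "real \<Rightarrow> real" and \<eta>1 \<eta>2 :: real
  assumes "\<eta>1 \<le> \<eta>2"
    and "(\<eta>1 \<notin> \<int> \<and> \<eta>2 \<notin> \<int>) \<or> (\<eta>1 \<in> \<int> \<and> \<eta>2 \<in> \<int>)"
    and "f absolutely_integrable_on {\<eta>1..\<eta>2}"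
    and "\<exists>U. open U \<and> (\<int> \<inter> {\<eta>1..\<eta>2}) \<subseteq> U \<and> continuous_on (U \<inter> {\<eta>1..\<eta>2}) f"
  shows "(\<lambda>n::nat. sqrt (real n * pi) *
            integral {\<eta>1..\<eta>2} (\<lambda>x. (cos (pi * x)) ^ (2 * n) * f x))
         \<longlonglongrightarrow> (\<Sum>m\<in>{m::real. m \<in> \<int> \<and> \<eta>1 \<le> m \<and> m \<le> \<eta>2}. f m)
             - (f \<eta>1 * indicator \<int> \<eta>1 + f \<eta>2 * indicator \<int> \<eta>2) / 2"
proof (rule tendsto_cos_pow_integral[OF assms(1,3)])
  obtain U where U: "open U" "\<int> \<inter> {\<eta>1..\<eta>2} \<subseteq> U" "continuous_on (U \<inter> {\<eta>1..\<eta>2}) f"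
    using assms(4) by blast
  fix m assume m: "m \<in> \<int> \<inter> {\<eta>1..\<eta>2}"
  then have "at m within {\<eta>1..\<eta>2} = at m within (U \<inter> {\<eta>1..\<eta>2})"
    using U(1,2) by (intro at_within_nhd[of m U]) auto
  moreover have "continuous (at m within (U \<inter> {\<eta>1..\<eta>2})) f"
    using U(2,3) m by (auto simp: continuous_on_eq_continuous_within)
  ultimately show "continuous (at m within {\<eta>1..\<eta>2}) f"
    by (simp add: continuous_within)
qed

end
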